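(* Let $F$ be a partially colored forest. Alice can win the $3$-Reduced Coloring Game on $\mathcal{R}'(F)$ if every trunk $R'$ of $\mathcal{R}'(F)$ satisfies one of: (i) $R'$ has exactly one colored vertex and contains no edge of $E_{>>2}(\mathcal{R}'(F))$; or (ii) $R'$ has no colored vertices and there exists a vertex $v\in V(R')$ that covers $E_{>>2}(R')$.
   Context: A partial coloring assigns to some vertices colors from a set of $3$ colors so that adjacent colored vertices differ; a color is legal for an uncolored vertex $v$ if no neighbor of $v$ has it. The $k$-Reduced Coloring Game ($k$-RCG) on a partially colored graph: Bob and Alice alternate turns, Bob first, each coloring an uncolored vertex with a legal color from a $k$-set of colors; Bob may pass; Alice may only color vertices of degree at least $k$; Bob wins if at some point an uncolored vertex has no legal color; Alice wins once every vertex of degree at least $k$ is colored. For a partially colored forest $F$, a trunk of $F$ is a maximal connected subgraph $R$ such that every colored vertex of $R$ is a leaf of $R$; $\mathcal{R}(F)$ is the partially colored forest formed by the disjoint union of all trunks of $F$ (a colored vertex lying in several trunks appears as a separate colored copy in each). For a graph $G$, $E_{>2}(G)$ is the set of edges $xy$ with $d_G(x)>2$ or $d_G(y)>2$, and $E_{>>2}(G)$ the set of edges $xy$ with $d_G(x)>2$ and $d_G(y)>2$. The reduced graph is $\mathcal{R}'(F)=\mathcal{R}(F)-\{xy: xy\notin E_{>2}(\mathcal{R}(F))\}$; its trunks are defined as for any partially colored forest. A vertex $v$ covers a set of edges if $v$ is an endpoint of every edge in the set. *)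

theory Defs
  imports Main
begin

text \<open>Graphs: vertex set V, edges as 2-element sets, partial colouring c (None = uncoloured).\<close>

definition deg :: "'v set set \<Rightarrow> 'v \<Rightarrow> nat" where
  "deg E x = card {y. {x, y} \<in> E \<and> y \<noteq> x}"

definition simple_graph :: "'v set \<Rightarrow> 'v set set \<Rightarrow> bool" where
  "simple_graph V E \<longleftrightarrow> finite V \<and> (\<forall>e\<in>E. \<exists>x y. e = {x, y} \<and> x \<noteq> y \<and> x \<in> V \<and> y \<in> V)"

definition has_cycle :: "'v set \<Rightarrow> 'v set set \<Rightarrow> bool" where
  "has_cycle V E \<longleftrightarrow> (\<exists>xs. length xs \<ge> 3 \<and> distinct xs \<and> set xs \<subseteq> V \<and>
      (\<forall>i < length xs. {xs ! i, xs ! ((i + 1) mod length xs)} \<in> E))"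

definition forest :: "'v set \<Rightarrow> 'v set set \<Rightarrow> bool" where
  "forest V E \<longleftrightarrow> simple_graph V E \<and> \<not> has_cycle V E"

definition partial_coloring :: "'v set \<Rightarrow> 'v set set \<Rightarrow> ('v \<Rightarrow> nat option) \<Rightarrow> bool" where
  "partial_coloring V E c \<longleftrightarrow> (\<forall>x\<in>V. \<forall>a. c x = Some a \<longrightarrow> a < 3) \<and>
     (\<forall>x y. {x, y} \<in> E \<and> x \<noteq> y \<and> c x \<noteq> None \<longrightarrow> c x \<noteq> c y)"

definition pc_forest :: "'v set \<Rightarrow> 'v set set \<Rightarrow> ('v \<Rightarrow> nat option) \<Rightarrow> bool" where
  "pc_forest V E c \<longleftrightarrow> forest V E \<and> partial_coloring V E c"

definition is_subgraph :: "'v set \<Rightarrow> 'v set set \<Rightarrow> 'v set \<Rightarrow> 'v set set \<Rightarrow> bool" where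
  "is_subgraph V E W D \<longleftrightarrow> W \<subseteq> V \<and> D \<subseteq> E \<and> (\<forall>e\<in>D. e \<subseteq> W)"

definition connected_graph :: "'v set \<Rightarrow> 'v set set \<Rightarrow> bool" where
  "connected_graph W D \<longleftrightarrow> W \<noteq> {} \<and>
     (\<forall>x\<in>W. \<forall>y\<in>W. (x, y) \<in> {(u, v). {u, v} \<in> D}\<^sup>*)"

definition trunk_candidate :: "'v set \<Rightarrow> 'v set set \<Rightarrow> ('v \<Rightarrow> nat option) \<Rightarrow> 'v set \<Rightarrow> 'v set set \<Rightarrow> bool" where
  "trunk_candidate V E c W D \<longleftrightarrow> is_subgraph V E W D \<and> connected_graph W D \<and>
     (\<forall>x\<in>W. c x \<noteq> None \<longrightarrow> deg D x = 1)"

definition is_trunk :: "'v set \<Rightarrow> 'v set set \<Rightarrow> ('v \<Rightarrow> nat option) \<Rightarrow> 'v set \<Rightarrow> 'v set set \<Rightarrow> bool" where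
  "is_trunk V E c W D \<longleftrightarrow> trunk_candidate V E c W D \<and>
     (\<forall>W' D'. trunk_candidate V E c W' D' \<and> W \<subseteq> W' \<and> D \<subseteq> D' \<longrightarrow> W' = W \<and> D' = D)"

definition trunks :: "'v set \<Rightarrow> 'v set set \<Rightarrow> ('v \<Rightarrow> nat option) \<Rightarrow> ('v set \<times> 'v set set) set" where
  "trunks V E c = {(W, D). is_trunk V E c W D}"

text \<open>R(F): disjoint union of the trunks; a vertex of R(F) is a pair (trunk, vertex).\<close>
definition R_V :: "'v set \<Rightarrow> 'v set set \<Rightarrow> ('v \<Rightarrow> nat option) \<Rightarrow> (('v set \<times> 'v set set) \<times> 'v) set" where
  "R_V V E c = {(T, x) | T x. T \<in> trunks V E c \<and> x \<in> fst T}"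

definition R_E :: "'v set \<Rightarrow> 'v set set \<Rightarrow> ('v \<Rightarrow> nat option) \<Rightarrow> (('v set \<times> 'v set set) \<times> 'v) set set" where
  "R_E V E c = {{(T, x), (T, y)} | T x y. T \<in> trunks V E c \<and> {x, y} \<in> snd T}"

definition R_col :: "('v \<Rightarrow> nat option) \<Rightarrow> (('v set \<times> 'v set set) \<times> 'v) \<Rightarrow> nat option" where
  "R_col c = (\<lambda>(T, x). c x)"

definition E_gt2 :: "'v set set \<Rightarrow> 'v set set" where
  "E_gt2 E = {e \<in> E. \<exists>x\<in>e. deg E x > 2}"

definition E_gtgt2 :: "'v set set \<Rightarrow> 'v set set" where
  "E_gtgt2 E = {e \<in> E. \<forall>x\<in>e. deg E x > 2}"

text \<open>R'(F) = R(F) minus the edges not in E_{>2}(R(F)); same vertices and colouring.\<close>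
definition R'_E :: "'v set \<Rightarrow> 'v set set \<Rightarrow> ('v \<Rightarrow> nat option) \<Rightarrow> (('v set \<times> 'v set set) \<times> 'v) set set" where
  "R'_E V E c = E_gt2 (R_E V E c)"

definition legal :: "nat \<Rightarrow> 'v set set \<Rightarrow> ('v \<Rightarrow> nat option) \<Rightarrow> 'v \<Rightarrow> nat \<Rightarrow> bool" where
  "legal k E c v a \<longleftrightarrow> a < k \<and> (\<forall>u. {u, v} \<in> E \<and> u \<noteq> v \<longrightarrow> c u \<noteq> Some a)"

definition blocked :: "nat \<Rightarrow> 'v set \<Rightarrow> 'v set set \<Rightarrow> ('v \<Rightarrow> nat option) \<Rightarrow> bool" where
  "blocked k V E c \<longleftrightarrow> (\<exists>v\<in>V. c v = None \<and> (\<forall>a. \<not> legal k E c v a))"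

definition alice_done :: "nat \<Rightarrow> 'v set \<Rightarrow> 'v set set \<Rightarrow> ('v \<Rightarrow> nat option) \<Rightarrow> bool" where
  "alice_done k V E c \<longleftrightarrow> (\<forall>v\<in>V. deg E v \<ge> k \<longrightarrow> c v \<noteq> None)"

text \<open>win_bob: positions with Bob to move from which Alice has a winning strategy;
  win_alice: positions with Alice to move from which Alice has a winning strategy.\<close>
inductive win_bob :: "nat \<Rightarrow> 'v set \<Rightarrow> 'v set set \<Rightarrow> ('v \<Rightarrow> nat option) \<Rightarrow> bool"
  and win_alice :: "nat \<Rightarrow> 'v set \<Rightarrow> 'v set set \<Rightarrow> ('v \<Rightarrow> nat option) \<Rightarrow> bool"
  for k V E where
  bob_done: "\<not> blocked k V E c \<Longrightarrow> alice_done k V E c \<Longrightarrow> win_bob k V E c"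
| bob_move: "\<not> blocked k V E c \<Longrightarrow> win_alice k V E c \<Longrightarrow>
     (\<forall>v\<in>V. \<forall>a. c v = None \<and> legal k E c v a \<longrightarrow> win_alice k V E (c(v := Some a))) \<Longrightarrow>
     win_bob k V E c"
| alice_fin: "\<not> blocked k V E c \<Longrightarrow> alice_done k V E c \<Longrightarrow> win_alice k V E c"
| alice_move: "\<not> blocked k V E c \<Longrightarrow> v \<in> V \<Longrightarrow> c v = None \<Longrightarrow> deg E v \<ge> k \<Longrightarrow>
     legal k E c v a \<Longrightarrow> win_bob k V E (c(v := Some a)) \<Longrightarrow> win_alice k V E c"

definition alice_wins_RCG :: "nat \<Rightarrow> 'v set \<Rightarrow> 'v set set \<Rightarrow> ('v \<Rightarrow> nat option) \<Rightarrow> bool" where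
  "alice_wins_RCG k V E c \<longleftrightarrow> win_bob k V E c"

end

(*
  Orient every trunk of R'(F) towards a root: its coloured vertex in case (i), a vertex covering
  all edges of E_{>>2} in case (ii). Then every coloured vertex of a trunk is its root, and a vertex
  of degree at least 3 whose parent also has degree at least 3 has a root as its parent.

  Alice keeps the position safe: every uncoloured vertex u of degree at least 3 sees at most one
  colour, and sees a colour on a neighbour other than its parent only if that parent is coloured.
  A safe position is never blocked, as vertices of degree at most 2 always keep a free colour.
  Alice colours an uncoloured vertex of degree at least 3 whose parent is not an uncoloured vertex
  of degree at least 3. When Bob colours w, only the invariant at the parent p of w can break;
  Alice then colours p, unless the parent g of p is uncoloured of degree at least 3: then g is a
  root without coloured neighbours, not adjacent to w, and she gives g the colour of w.
*)

theory Submission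
  imports Defs "HOL-Library.Product_Order"
begin

section \<open>Neighbourhoods and free colours\<close>

definition nbrs :: "'v set set \<Rightarrow> 'v \<Rightarrow> 'v set" where
  "nbrs E x = {y. {x, y} \<in> E \<and> y \<noteq> x}"

lemma deg_eq_card_nbrs: "deg E x = card (nbrs E x)"
  by (simp add: deg_def nbrs_def)

lemma nbrs_mono: "D \<subseteq> E \<Longrightarrow> nbrs D x \<subseteq> nbrs E x"
  by (auto simp: nbrs_def)

lemma simple_graph_nbrs_subset:
  assumes "simple_graph V E"
  shows "nbrs E x \<subseteq> V"
proof
  fix y assume "y \<in> nbrs E x"
  then have "{x, y} \<in> E" by (simp add: nbrs_def)
  with assms obtain a b where "{x, y} = {a, b}" "a \<in> V" "b \<in> V"
    unfolding simple_graph_def by blast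
  then show "y \<in> V" by (auto simp: doubleton_eq_iff)
qed

lemma simple_graph_edge_subset: "simple_graph V E \<Longrightarrow> e \<in> E \<Longrightarrow> e \<subseteq> V"
  unfolding simple_graph_def by fast

lemma simple_graph_finite_nbrs:
  assumes "simple_graph V E"
  shows "finite (nbrs E x)"
proof (rule finite_subset)
  show "nbrs E x \<subseteq> V" using assms by (rule simple_graph_nbrs_subset)
  show "finite V" using assms by (simp add: simple_graph_def)
qed

lemma simple_graph_finite_edges:
  assumes "simple_graph V E"
  shows "finite E"
proof (rule finite_subset)
  show "E \<subseteq> Pow V" using simple_graph_edge_subset[OF assms] by blast
  show "finite (Pow V)" using assms by (simp add: simple_graph_def)
qed

lemma finite_subset_doubleton:
  assumes "finite A" "card A \<le> 2"
  shows "\<exists>p q. A \<subseteq> {p, q}"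
proof (cases "A = {}")
  case False
  then obtain p where p: "p \<in> A" by auto
  with assms have "card (A - {p}) \<le> 1" by simp
  then have "card (A - {p}) = 0 \<or> card (A - {p}) = 1" by arith
  with assms(1) have "A - {p} = {} \<or> (\<exists>q. A - {p} = {q})"
    by (metis card_0_eq card_1_singletonE finite_Diff)
  then show ?thesis by blast
qed auto

definition seen_colours :: "'v set set \<Rightarrow> ('v \<Rightarrow> nat option) \<Rightarrow> 'v \<Rightarrow> nat set" where
  "seen_colours E c v = {a. \<exists>u\<in>nbrs E v. c u = Some a}"

lemma legal_iff_unseen: "legal k E c v a \<longleftrightarrow> a < k \<and> a \<notin> seen_colours E c v"
  by (auto simp: legal_def seen_colours_def nbrs_def insert_commute)

lemma ex_legal_if_seen_subset_doubleton:
  assumes "seen_colours E c v \<subseteq> {a1, a2}"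
  shows "\<exists>a. legal 3 E c v a"
proof -
  have "\<exists>a::nat. a < 3 \<and> a \<noteq> a1 \<and> a \<noteq> a2"
    by presburger
  with assms show ?thesis
    by (auto simp: legal_iff_unseen)
qed

lemma seen_colours_subset_doubleton_if_deg_le_2:
  assumes "finite (nbrs E v)" "deg E v \<le> 2"
  shows "\<exists>a1 a2. seen_colours E c v \<subseteq> {a1, a2}"
proof -
  let ?S = "(\<lambda>u. the (c u)) ` nbrs E v"
  have "card ?S \<le> 2"
    using card_image_le[OF assms(1), of "\<lambda>u. the (c u)"] assms(2)
    by (simp add: deg_eq_card_nbrs)
  moreover have "finite ?S"
    using assms(1) by simp
  ultimately obtain a1 a2 where "?S \<subseteq> {a1, a2}"
    using finite_subset_doubleton by metis
  moreover have "seen_colours E c v \<subseteq> ?S"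
    unfolding seen_colours_def by (auto intro: rev_image_eqI)
  ultimately show ?thesis
    by (meson order_trans)
qed

section \<open>Alice's strategy on a shallow orientation\<close>

definition orientation :: "'v set set \<Rightarrow> ('v \<Rightarrow> 'v option) \<Rightarrow> bool" where
  "orientation E par \<longleftrightarrow> (\<forall>x y. y \<in> nbrs E x \<longrightarrow> par x = Some y \<or> par y = Some x) \<and>
     (\<forall>x y. par x = Some y \<longrightarrow> y \<in> nbrs E x)"

definition safe_at :: "'v set set \<Rightarrow> ('v \<Rightarrow> 'v option) \<Rightarrow> ('v \<Rightarrow> nat option) \<Rightarrow> 'v \<Rightarrow> bool" where
  "safe_at E par c u \<longleftrightarrow> c u = None \<longrightarrow> 3 \<le> deg E u \<longrightarrow>
     (\<exists>b. seen_colours E c u \<subseteq> {b}) \<and>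
     ((\<exists>y\<in>nbrs E u. c y \<noteq> None \<and> par u \<noteq> Some y) \<longrightarrow> (\<exists>p. par u = Some p \<and> c p \<noteq> None))"

definition safe :: "'v set set \<Rightarrow> ('v \<Rightarrow> 'v option) \<Rightarrow> ('v \<Rightarrow> nat option) \<Rightarrow> bool" where
  "safe E par c \<longleftrightarrow> (\<forall>u. safe_at E par c u)"

lemma safe_at_uncoloured_nbrs:
  assumes "safe_at E par c u" "c u = None" "3 \<le> deg E u"
    and "\<nexists>p. par u = Some p \<and> c p \<noteq> None" "y \<in> nbrs E u"
  shows "c y = None"
  using assms unfolding safe_at_def by blast

lemma safe_at_extend:
  assumes safe: "safe_at E par c u"
    and ext: "\<And>x. c x \<noteq> None \<Longrightarrow> c' x = c x"
    and changed_parent: "\<And>z. c' u = None \<Longrightarrow> 3 \<le> deg E u \<Longrightarrow> z \<in> nbrs E u \<Longrightarrow> c' z \<noteq> c z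
      \<Longrightarrow> par u = Some z"
  shows "safe_at E par c' u"
  unfolding safe_at_def
proof (intro impI)
  assume c'u: "c' u = None" and big: "3 \<le> deg E u"
  have cu: "c u = None" using ext c'u by fastforce
  show "(\<exists>b. seen_colours E c' u \<subseteq> {b}) \<and>
    ((\<exists>y\<in>nbrs E u. c' y \<noteq> None \<and> par u \<noteq> Some y) \<longrightarrow> (\<exists>p. par u = Some p \<and> c' p \<noteq> None))"
  proof (cases "\<exists>z\<in>nbrs E u. c' z \<noteq> c z")
    case True
    then obtain z where z: "z \<in> nbrs E u" "c' z \<noteq> c z" by blast
    have pz: "par u = Some z" using changed_parent c'u big z by blast
    have "c z = None" using ext z(2) by blast
    then have clean: "c y = None" if "y \<in> nbrs E u" for y
      using safe_at_uncoloured_nbrs[OF safe cu big _ that] pz by simp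
    have only_z: "y = z" if "y \<in> nbrs E u" "c' y \<noteq> None" for y
      using changed_parent[OF c'u big that(1)] clean[OF that(1)] that(2) pz by auto
    have "seen_colours E c' u \<subseteq> {the (c' z)}"
      unfolding seen_colours_def using only_z by fastforce
    then show ?thesis using only_z pz by blast
  next
    case False
    then have same: "c' y = c y" if "y \<in> nbrs E u" for y using that by blast
    then have "seen_colours E c' u = seen_colours E c u"
      unfolding seen_colours_def by auto
    moreover have "(\<exists>y\<in>nbrs E u. c y \<noteq> None \<and> par u \<noteq> Some y) \<longrightarrow>
        (\<exists>p. par u = Some p \<and> c' p \<noteq> None)"
      using safe cu big ext unfolding safe_at_def by fastforce
    ultimately show ?thesis using safe cu big same unfolding safe_at_def by auto
  qed
qed

definition uncoloured :: "'v set \<Rightarrow> ('v \<Rightarrow> nat option) \<Rightarrow> 'v set" where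
  "uncoloured V c = {v \<in> V. c v = None}"

lemma card_uncoloured_update_less:
  assumes "finite V" "v \<in> V" "c v = None"
  shows "card (uncoloured V (c(v := Some a))) < card (uncoloured V c)"
proof -
  have "uncoloured V (c(v := Some a)) = uncoloured V c - {v}"
    by (auto simp: uncoloured_def)
  moreover have "v \<in> uncoloured V c" "finite (uncoloured V c)"
    using assms by (auto simp: uncoloured_def)
  ultimately show ?thesis
    by (metis card_Diff1_less)
qed

locale shallow_orientation =
  fixes V :: "'v set" and E :: "'v set set" and par :: "'v \<Rightarrow> 'v option"
  assumes simple: "simple_graph V E"
    and orientation: "orientation E par"
    and big_parent_is_root: "\<And>u g. par u = Some g \<Longrightarrow> 3 \<le> deg E u \<Longrightarrow> 3 \<le> deg E g \<Longrightarrow> par g = None"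
begin

lemma finite_V: "finite V"
  using simple by (simp add: simple_graph_def)

lemma parent_in_nbrs: "par x = Some y \<Longrightarrow> y \<in> nbrs E x"
  using orientation by (simp add: orientation_def)

lemma parent_if_not_child: "z \<in> nbrs E u \<Longrightarrow> par z \<noteq> Some u \<Longrightarrow> par u = Some z"
  using orientation by (auto simp: orientation_def)

lemma parent_in_V: "par x = Some y \<Longrightarrow> y \<in> V"
  using parent_in_nbrs simple_graph_nbrs_subset[OF simple] by blast

lemma parent_neq: "par x = Some y \<Longrightarrow> y \<noteq> x"
  using parent_in_nbrs by (auto simp: nbrs_def)

lemma not_blocked_if_two_colours_seen:
  assumes "\<And>v. c v = None \<Longrightarrow> 3 \<le> deg E v \<Longrightarrow> \<exists>a1 a2. seen_colours E c v \<subseteq> {a1, a2}"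
  shows "\<not> blocked 3 V E c"
proof -
  have "\<exists>a1 a2. seen_colours E c v \<subseteq> {a1, a2}" if "c v = None" for v
  proof (cases "3 \<le> deg E v")
    case False
    then show ?thesis
      using seen_colours_subset_doubleton_if_deg_le_2[OF simple_graph_finite_nbrs[OF simple]]
      by simp
  qed (use assms that in blast)
  then show ?thesis
    unfolding blocked_def by (metis ex_legal_if_seen_subset_doubleton)
qed

lemma safe_not_blocked_after_move:
  assumes "safe E par c"
  shows "\<not> blocked 3 V E (c(w := Some a))"
proof (rule not_blocked_if_two_colours_seen)
  fix v assume v: "(c(w := Some a)) v = None" "3 \<le> deg E v"
  then have "c v = None" by (auto split: if_splits)
  with assms v(2) obtain b where "seen_colours E c v \<subseteq> {b}"
    unfolding safe_def safe_at_def by blast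
  then have "seen_colours E (c(w := Some a)) v \<subseteq> {b, a}"
    unfolding seen_colours_def by auto
  then show "\<exists>a1 a2. seen_colours E (c(w := Some a)) v \<subseteq> {a1, a2}" by blast
qed

lemma safe_not_blocked:
  assumes "safe E par c"
  shows "\<not> blocked 3 V E c"
proof (rule not_blocked_if_two_colours_seen)
  fix v assume "c v = None" "3 \<le> deg E v"
  with assms obtain b where "seen_colours E c v \<subseteq> {b}"
    unfolding safe_def safe_at_def by blast
  then show "\<exists>a1 a2. seen_colours E c v \<subseteq> {a1, a2}" by blast
qed

lemma safe_colour_update:
  assumes safe: "safe E par c" and t: "c t = None"
    and no_threat: "\<nexists>g. par t = Some g \<and> c g = None \<and> 3 \<le> deg E g"
  shows "safe E par (c(t := Some a))"
  unfolding safe_def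
proof
  fix u
  show "safe_at E par (c(t := Some a)) u"
  proof (rule safe_at_extend)
    show "safe_at E par c u" using safe by (simp add: safe_def)
    show "c x \<noteq> None \<Longrightarrow> (c(t := Some a)) x = c x" for x using t by auto
  next
    fix z assume u: "(c(t := Some a)) u = None" "3 \<le> deg E u"
      and z: "z \<in> nbrs E u" "(c(t := Some a)) z \<noteq> c z"
    then have "z = t" "c u = None" by (auto split: if_splits)
    then show "par u = Some z"
      using parent_if_not_child[OF z(1)] no_threat u(2) by blast
  qed
qed

lemma alice_wins_if_safe:
  assumes safe: "safe E par c"
    and IH: "\<And>c'. safe E par c' \<Longrightarrow> card (uncoloured V c') < card (uncoloured V c) \<Longrightarrow>
      win_bob 3 V E c'"
  shows "win_alice 3 V E c"
proof (cases "alice_done 3 V E c")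
  case True
  then show ?thesis by (rule alice_fin[OF safe_not_blocked[OF safe]])
next
  case False
  then obtain u where u: "u \<in> V" "c u = None" "3 \<le> deg E u"
    unfolding alice_done_def by auto
  obtain t where t: "t \<in> V" "c t = None" "3 \<le> deg E t"
    and no_threat: "\<nexists>g. par t = Some g \<and> c g = None \<and> 3 \<le> deg E g"
  proof (cases "\<exists>g. par u = Some g \<and> c g = None \<and> 3 \<le> deg E g")
    case True
    then obtain g where g: "par u = Some g" "c g = None" "3 \<le> deg E g" by blast
    moreover have "par g = None" using big_parent_is_root[OF g(1) u(3) g(3)] .
    ultimately show ?thesis
      using that[of g] parent_in_V[OF g(1)] by simp
  qed (use that u in blast)
  obtain a where a: "legal 3 E c t a"
    using safe_not_blocked[OF safe] t unfolding blocked_def by blast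
  have "win_bob 3 V E (c(t := Some a))"
    using IH safe_colour_update[OF safe t(2) no_threat] card_uncoloured_update_less[where c = c, OF finite_V t(1,2)]
    by blast
  then show ?thesis
    by (rule alice_move[OF safe_not_blocked[OF safe] t a])
qed

lemma safe_after_answer_at_root:
  assumes safe: "safe E par c" and w: "c w = None"
    and p: "par w = Some p" "c p = None" "3 \<le> deg E p"
    and g: "par p = Some g" "c g = None" "3 \<le> deg E g" and a: "a < 3"
  shows "legal 3 E (c(w := Some a)) g a"
    and "safe E par (c(w := Some a, g := Some a))"
proof -
  have root: "par g = None" using big_parent_is_root[OF g(1) p(3) g(3)] .
  have "p \<noteq> w" "g \<noteq> p" using parent_neq p(1) g(1) by blast+
  have "g \<noteq> w" using root p(1) by auto
  have clean_g: "c y = None" if "y \<in> nbrs E g" for y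
    using safe_at_uncoloured_nbrs[where c = c and par = par, OF _ g(2,3) _ that] safe root by (simp add: safe_def)
  have clean_p: "c y = None" if "y \<in> nbrs E p" for y
    using safe_at_uncoloured_nbrs[where c = c and par = par, OF _ p(2,3) _ that] safe g(1,2) by (simp add: safe_def)
  have "w \<notin> nbrs E g"
    using parent_if_not_child root p(1) \<open>g \<noteq> p\<close> by fastforce
  then show "legal 3 E (c(w := Some a)) g a"
    using clean_g a by (auto simp: legal_iff_unseen seen_colours_def)
  show "safe E par (c(w := Some a, g := Some a))"
    unfolding safe_def
  proof
    fix u
    show "safe_at E par (c(w := Some a, g := Some a)) u"
    proof (cases "u = p")
      case True
      have "seen_colours E (c(w := Some a, g := Some a)) p \<subseteq> {a}"
        using clean_p by (auto simp: seen_colours_def)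
      then show ?thesis
        using True g(1) \<open>g \<noteq> w\<close> unfolding safe_at_def by auto
    next
      case False
      show ?thesis
      proof (rule safe_at_extend)
        show "safe_at E par c u" using safe by (simp add: safe_def)
        show "c x \<noteq> None \<Longrightarrow> (c(w := Some a, g := Some a)) x = c x" for x
          using w g(2) by auto
      next
        fix z assume u: "(c(w := Some a, g := Some a)) u = None"
          and z: "z \<in> nbrs E u" "(c(w := Some a, g := Some a)) z \<noteq> c z"
        then have "z = w \<or> z = g" by (auto split: if_splits)
        then have "par z \<noteq> Some u" using p(1) root False by auto
        then show "par u = Some z" using parent_if_not_child[OF z(1)] by blast
      qed
    qed
  qed
qed

lemma safe_after_answer_at_parent:
  assumes safe: "safe E par c" and w: "c w = None"
    and p: "par w = Some p" "c p = None"
    and no_threat: "\<nexists>g. par p = Some g \<and> c g = None \<and> 3 \<le> deg E g"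
  shows "safe E par (c(w := Some a0, p := Some a))"
  unfolding safe_def
proof
  fix u
  show "safe_at E par (c(w := Some a0, p := Some a)) u"
  proof (rule safe_at_extend)
    show "safe_at E par c u" using safe by (simp add: safe_def)
    show "c x \<noteq> None \<Longrightarrow> (c(w := Some a0, p := Some a)) x = c x" for x
      using w p(2) by auto
  next
    fix z assume u: "(c(w := Some a0, p := Some a)) u = None" "3 \<le> deg E u"
      and z: "z \<in> nbrs E u" "(c(w := Some a0, p := Some a)) z \<noteq> c z"
    then have "z = w \<or> z = p" "u \<noteq> p" "c u = None" by (auto split: if_splits)
    then have "par z \<noteq> Some u" using p(1) no_threat u(2) by auto
    then show "par u = Some z" using parent_if_not_child[OF z(1)] by blast
  qed
qed

lemma alice_answers_bob:
  assumes safe: "safe E par c" and w: "w \<in> V" "c w = None" "legal 3 E c w a0"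
    and IH: "\<And>c'. safe E par c' \<Longrightarrow> card (uncoloured V c') < card (uncoloured V c) \<Longrightarrow>
      win_bob 3 V E c'"
  shows "win_alice 3 V E (c(w := Some a0))"
proof -
  let ?c1 = "c(w := Some a0)"
  have not_blocked: "\<not> blocked 3 V E ?c1" by (rule safe_not_blocked_after_move[OF safe])
  have fewer: "card (uncoloured V (?c1(v := Some a))) < card (uncoloured V c)"
    if "v \<in> V" "?c1 v = None" for v a
    using card_uncoloured_update_less[where c = ?c1 and a = a, OF finite_V that]
      card_uncoloured_update_less[where c = c and a = a0, OF finite_V w(1,2)]
    by simp
  show ?thesis
  proof (cases "\<exists>p. par w = Some p \<and> c p = None \<and> 3 \<le> deg E p")
    case True
    then obtain p where p: "par w = Some p" "c p = None" "3 \<le> deg E p" by blast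
    have pV: "p \<in> V" and "p \<noteq> w" using parent_in_V parent_neq p(1) by blast+
    then have c1p: "?c1 p = None" using p(2) by simp
    show ?thesis
    proof (cases "\<exists>g. par p = Some g \<and> c g = None \<and> 3 \<le> deg E g")
      case True
      then obtain g where g: "par p = Some g" "c g = None" "3 \<le> deg E g" by blast
      have a0: "a0 < 3" using w(3) by (simp add: legal_def)
      have gV: "g \<in> V" using parent_in_V g(1) .
      have "g \<noteq> w" using big_parent_is_root[OF g(1) p(3) g(3)] p(1) by auto
      then have "?c1 g = None" using g(2) by simp
      then show ?thesis
        using alice_move[OF not_blocked gV _ g(3) safe_after_answer_at_root(1)[OF safe w(2) p g a0]]
          IH safe_after_answer_at_root(2)[OF safe w(2) p g a0] fewer[OF gV] by blast
    next
      case False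
      obtain a where a: "legal 3 E ?c1 p a"
        using not_blocked pV c1p unfolding blocked_def by blast
      show ?thesis
        using alice_move[OF not_blocked pV c1p p(3) a]
          IH safe_after_answer_at_parent[OF safe w(2) p(1,2) False] fewer[OF pV c1p] by blast
    qed
  next
    case False
    have "safe E par ?c1" by (rule safe_colour_update[OF safe w(2) False])
    then show ?thesis
    proof (rule alice_wins_if_safe)
      show "win_bob 3 V E c'"
        if "safe E par c'" "card (uncoloured V c') < card (uncoloured V ?c1)" for c'
        using IH[OF that(1)] that(2) card_uncoloured_update_less[where c = c and a = a0, OF finite_V w(1,2)]
        by linarith
    qed
  qed
qed

theorem safe_imp_win_bob: "safe E par c \<Longrightarrow> win_bob 3 V E c"
proof (induction "card (uncoloured V c)" arbitrary: c rule: less_induct)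
  case less
  show ?case
  proof (cases "alice_done 3 V E c")
    case True
    then show ?thesis by (rule bob_done[OF safe_not_blocked[OF less.prems]])
  next
    case False
    show ?thesis
    proof (rule bob_move[OF safe_not_blocked[OF less.prems]])
      show "win_alice 3 V E c" by (rule alice_wins_if_safe[OF less.prems less.hyps])
      show "\<forall>v\<in>V. \<forall>a. c v = None \<and> legal 3 E c v a \<longrightarrow> win_alice 3 V E (c(v := Some a))"
        using alice_answers_bob[OF less.prems _ _ _ less.hyps] by blast
    qed
  qed
qed

end

section \<open>Orienting forests\<close>

lemma forest_subgraph:
  assumes "forest V E" "W \<subseteq> V" "D \<subseteq> E" "\<forall>e\<in>D. e \<subseteq> W"
  shows "forest W D"
proof -
  have simple: "simple_graph V E" and acyclic: "\<not> has_cycle V E"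
    using assms(1) by (simp_all add: forest_def)
  then have "finite W" using assms(2) finite_subset by (auto simp: simple_graph_def)
  moreover have "\<exists>x y. e = {x, y} \<and> x \<noteq> y \<and> x \<in> W \<and> y \<in> W" if "e \<in> D" for e
  proof -
    have "e \<in> E" using assms(3) that by (rule subsetD)
    then obtain x y where "e = {x, y}" "x \<noteq> y"
      using simple unfolding simple_graph_def by fast
    moreover have "x \<in> W" "y \<in> W" using assms(4) that calculation(1) by auto
    ultimately show ?thesis by blast
  qed
  moreover have "\<not> has_cycle W D"
    using acyclic assms(2,3) unfolding has_cycle_def by (meson order_trans subsetD)
  ultimately show ?thesis by (simp add: forest_def simple_graph_def)
qed

definition is_path :: "'v set set \<Rightarrow> 'v list \<Rightarrow> bool" where
  "is_path D xs \<longleftrightarrow> distinct xs \<and> 2 \<le> length xs \<and> (\<forall>i. Suc i < length xs \<longrightarrow> {xs ! i, xs ! Suc i} \<in> D)"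

lemma is_path_rev: "is_path D xs \<Longrightarrow> is_path D (rev xs)"
  unfolding is_path_def
proof (intro conjI allI impI; (elim conjE)?)
  fix i assume edges: "\<forall>i. Suc i < length xs \<longrightarrow> {xs ! i, xs ! Suc i} \<in> D"
    and i: "Suc i < length (rev xs)"
  define j where "j = length xs - Suc (Suc i)"
  have "rev xs ! i = xs ! Suc j" "rev xs ! Suc i = xs ! j" "Suc j < length xs"
    using i by (auto simp: rev_nth j_def Suc_diff_Suc)
  then show "{rev xs ! i, rev xs ! Suc i} \<in> D"
    using edges by (simp add: insert_commute)
qed auto

lemma is_path_set_subset:
  assumes "simple_graph W D" "is_path D xs"
  shows "set xs \<subseteq> W"
proof
  fix v assume "v \<in> set xs"
  then obtain i where i: "i < length xs" "xs ! i = v" by (auto simp: in_set_conv_nth)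
  have L: "2 \<le> length xs" and edge: "\<And>j. Suc j < length xs \<Longrightarrow> {xs ! j, xs ! Suc j} \<in> D"
    using assms(2) by (auto simp: is_path_def)
  have "\<exists>e\<in>D. v \<in> e"
  proof (cases "Suc i < length xs")
    case True
    then show ?thesis using edge[of i] i(2) by blast
  next
    case False
    then have "Suc (i - 1) < length xs" "Suc (i - 1) = i" using i(1) L by auto
    then show ?thesis using edge[of "i - 1"] i(2) by (metis insertI1 insert_commute)
  qed
  then show "v \<in> W" using simple_graph_edge_subset[OF assms(1)] by blast
qed

lemma is_path_chord_has_cycle:
  assumes simple: "simple_graph W D" and path: "is_path D xs"
    and j: "j < length xs" "2 \<le> j" and chord: "{xs ! 0, xs ! j} \<in> D"
  shows "has_cycle W D"
  unfolding has_cycle_def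
proof (intro exI conjI allI impI)
  let ?ys = "take (Suc j) xs"
  have ly: "length ?ys = Suc j" using j by simp
  show "3 \<le> length ?ys" using ly j by simp
  show "distinct ?ys" using path by (simp add: is_path_def)
  show "set ?ys \<subseteq> W"
    using is_path_set_subset[OF simple path] set_take_subset by (rule order_trans[rotated])
  fix i assume i: "i < length ?ys"
  show "{?ys ! i, ?ys ! ((i + 1) mod length ?ys)} \<in> D"
  proof (cases "i < j")
    case True
    then show ?thesis using path j ly by (simp add: is_path_def)
  next
    case False
    then have "i = j" using i ly by simp
    then show ?thesis using chord j ly by (simp add: insert_commute)
  qed
qed

lemma longest_path_starts_at_leaf:
  assumes forest: "forest W D" and path: "is_path D xs"
    and longest: "\<And>ys. is_path D ys \<Longrightarrow> length ys \<le> length xs"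
  shows "nbrs D (xs ! 0) = {xs ! 1}"
proof -
  have d: "distinct xs" and L: "2 \<le> length xs"
    and edge: "\<And>i. Suc i < length xs \<Longrightarrow> {xs ! i, xs ! Suc i} \<in> D"
    using path by (auto simp: is_path_def)
  have "xs ! 1 \<noteq> xs ! 0" using nth_eq_iff_index_eq[OF d, of 1 0] L by fastforce
  then have "xs ! 1 \<in> nbrs D (xs ! 0)" using edge[of 0] L by (simp add: nbrs_def)
  moreover have "z = xs ! 1" if z: "z \<in> nbrs D (xs ! 0)" for z
  proof (rule ccontr)
    assume zn: "z \<noteq> xs ! 1"
    have ez: "{xs ! 0, z} \<in> D" and z0: "z \<noteq> xs ! 0" using z by (auto simp: nbrs_def)
    show False
    proof (cases "z \<in> set xs")
      case False
      have "is_path D (z # xs)"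
        unfolding is_path_def
      proof (intro conjI allI impI)
        fix i assume "Suc i < length (z # xs)"
        then show "{(z # xs) ! i, (z # xs) ! Suc i} \<in> D"
          using ez edge by (cases i) (auto simp: insert_commute)
      qed (use d L False in auto)
      then show False using longest[of "z # xs"] by simp
    next
      case True
      then obtain j where j: "j < length xs" "xs ! j = z" by (auto simp: in_set_conv_nth)
      have "2 \<le> j" using j z0 zn by (cases j; cases "j - 1"; auto)
      moreover have "simple_graph W D" using forest by (simp add: forest_def)
      ultimately have "has_cycle W D"
        using is_path_chord_has_cycle[OF _ path j(1)] ez j(2) by simp
      then show False using forest by (simp add: forest_def)
    qed
  qed
  ultimately show ?thesis by blast
qed

lemma forest_ex_leaf_other_than:
  assumes forest: "forest W D" and "D \<noteq> {}"
  shows "\<exists>l m. l \<noteq> r \<and> nbrs D l = {m}"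
proof -
  have simple: "simple_graph W D" using forest by (simp add: forest_def)
  obtain e where "e \<in> D" using assms(2) by blast
  then obtain a b where ab: "{a, b} \<in> D" "a \<noteq> b"
    using simple unfolding simple_graph_def by fast
  have "is_path D [a, b]" using ab by (simp add: is_path_def)
  moreover have "length xs < Suc (card W)" if "is_path D xs" for xs
  proof -
    have "length xs = card (set xs)" using that by (simp add: is_path_def distinct_card)
    also have "\<dots> \<le> card W"
      using card_mono is_path_set_subset[OF simple that] simple by (auto simp: simple_graph_def)
    finally show ?thesis by simp
  qed
  ultimately obtain xs where path: "is_path D xs" and longest: "\<And>ys. is_path D ys \<Longrightarrow> length ys \<le> length xs"
    using ex_has_greatest_nat[of "is_path D" "[a, b]" length "Suc (card W)"] by metis
  have L: "2 \<le> length xs" and d: "distinct xs" using path by (auto simp: is_path_def)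
  have "nbrs D (xs ! 0) = {xs ! 1}"
    by (rule longest_path_starts_at_leaf[OF forest path longest])
  moreover have "nbrs D (rev xs ! 0) = {rev xs ! 1}"
    using longest_path_starts_at_leaf[OF forest is_path_rev[OF path]] longest by simp
  moreover have "rev xs ! 0 \<noteq> xs ! 0"
    using L nth_eq_iff_index_eq[OF d, of "length xs - 1" 0] rev_nth[of 0 xs] by fastforce
  ultimately show ?thesis by (metis (no_types))
qed

lemma orientation_add_leaf:
  assumes leaf: "nbrs D l = {m}" and p: "orientation (D - {{l, m}}) p"
  shows "orientation D (p(l := Some m))"
  unfolding orientation_def
proof (intro conjI allI impI)
  let ?D' = "D - {{l, m}}"
  have "y = m" if "{l, y} \<in> D" "y \<noteq> l" for y
    using leaf that unfolding nbrs_def by blast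
  then have l_isolated: "l \<notin> nbrs ?D' x" "nbrs ?D' l = {}" for x
    unfolding nbrs_def by (auto simp: insert_commute)
  fix x y
  show "(p(l := Some m)) x = Some y \<or> (p(l := Some m)) y = Some x" if y: "y \<in> nbrs D x"
  proof (cases "{x, y} = {l, m}")
    case True
    then show ?thesis by (auto simp: doubleton_eq_iff)
  next
    case False
    then have "y \<in> nbrs ?D' x" using y by (auto simp: nbrs_def)
    moreover have "x \<noteq> l" "y \<noteq> l" using calculation l_isolated by auto
    ultimately show ?thesis using p by (simp add: orientation_def)
  qed
  show "y \<in> nbrs D x" if "(p(l := Some m)) x = Some y"
    using that p leaf nbrs_mono[of ?D' D] unfolding orientation_def by (fastforce split: if_splits)
qed

lemma forest_ex_orientation:
  assumes "forest W D"
  shows "\<exists>p. orientation D p \<and> p r = None"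
  using assms
proof (induction "card D" arbitrary: D rule: less_induct)
  case less
  show ?case
  proof (cases "D = {}")
    case True
    then show ?thesis by (intro exI[of _ "\<lambda>_. None"]) (simp add: orientation_def nbrs_def)
  next
    case False
    obtain l m where l: "l \<noteq> r" "nbrs D l = {m}"
      using forest_ex_leaf_other_than[OF less.prems False] by blast
    have lm: "{l, m} \<in> D" using l(2) unfolding nbrs_def by blast
    have simple: "simple_graph W D" using less.prems by (simp add: forest_def)
    then have "finite D" by (rule simple_graph_finite_edges)
    then have "card (D - {{l, m}}) < card D" using lm by (rule card_Diff1_less)
    moreover have "forest W (D - {{l, m}})"
      using forest_subgraph[OF less.prems order_refl] simple_graph_edge_subset[OF simple] by blast
    ultimately obtain p where p: "orientation (D - {{l, m}}) p" "p r = None"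
      using less.hyps by blast
    show ?thesis
      using orientation_add_leaf[OF l(2) p(1)] p(2) l(1) by (intro exI[of _ "p(l := Some m)"]) simp
  qed
qed

lemma orientation_glue:
  fixes \<T> :: "('v set \<times> 'v set set) set" and p :: "'v set \<times> 'v set set \<Rightarrow> 'v \<Rightarrow> 'v option"
  assumes cover: "\<And>x y. y \<in> nbrs E x \<Longrightarrow> \<exists>T\<in>\<T>. x \<in> fst T"
    and disjoint: "\<And>T T' x. T \<in> \<T> \<Longrightarrow> T' \<in> \<T> \<Longrightarrow> x \<in> fst T \<Longrightarrow> x \<in> fst T' \<Longrightarrow> T = T'"
    and closed: "\<And>T x y. T \<in> \<T> \<Longrightarrow> x \<in> fst T \<Longrightarrow> y \<in> nbrs E x \<Longrightarrow> y \<in> fst T"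
    and local_nbrs: "\<And>T x. T \<in> \<T> \<Longrightarrow> x \<in> fst T \<Longrightarrow> nbrs (snd T) x = nbrs E x"
    and orient: "\<And>T. T \<in> \<T> \<Longrightarrow> orientation (snd T) (p T)"
  shows "\<exists>par. orientation E par \<and> (\<forall>T\<in>\<T>. \<forall>x\<in>fst T. par x = p T x)"
proof -
  define par where
    "par x = (if \<exists>T\<in>\<T>. x \<in> fst T then p (THE T. T \<in> \<T> \<and> x \<in> fst T) x else None)" for x
  have par_eq: "par x = p T x" if "T \<in> \<T>" "x \<in> fst T" for T x
  proof -
    have "(THE T. T \<in> \<T> \<and> x \<in> fst T) = T"
      using that disjoint by blast
    then show ?thesis using that unfolding par_def by auto
  qed
  have "orientation E par"
    unfolding orientation_def
  proof (intro conjI allI impI)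
    fix x y assume y: "y \<in> nbrs E x"
    then obtain T where T: "T \<in> \<T>" "x \<in> fst T" using cover by blast
    have "y \<in> fst T" using closed[OF T y] .
    moreover have "y \<in> nbrs (snd T) x" using local_nbrs[OF T] y by simp
    then have "p T x = Some y \<or> p T y = Some x" using orient[OF T(1)] by (simp add: orientation_def)
    ultimately show "par x = Some y \<or> par y = Some x" using par_eq T by simp
  next
    fix x y assume xy: "par x = Some y"
    then obtain T where T: "T \<in> \<T>" "x \<in> fst T" unfolding par_def by (auto split: if_splits)
    then have "y \<in> nbrs (snd T) x" using orient xy par_eq by (simp add: orientation_def)
    then show "y \<in> nbrs E x" using local_nbrs[OF T] by simp
  qed
  then show ?thesis using par_eq by blast
qed

section \<open>Trunks\<close>

lemma connected_graph_Un:
  assumes "connected_graph W1 D1" "connected_graph W2 D2" "z \<in> W1" "z \<in> W2"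
  shows "connected_graph (W1 \<union> W2) (D1 \<union> D2)"
proof -
  let ?R = "\<lambda>D. {(u, v). {u, v} \<in> D}"
  have mono: "(?R D1)\<^sup>* \<subseteq> (?R (D1 \<union> D2))\<^sup>*" "(?R D2)\<^sup>* \<subseteq> (?R (D1 \<union> D2))\<^sup>*"
    by (auto intro!: rtrancl_mono)
  have "(a, z) \<in> (?R (D1 \<union> D2))\<^sup>* \<and> (z, a) \<in> (?R (D1 \<union> D2))\<^sup>*" if "a \<in> W1 \<union> W2" for a
    using that assms mono unfolding connected_graph_def by blast
  then show ?thesis
    using assms(3) unfolding connected_graph_def by (blast intro: rtrancl_trans)
qed

lemma connected_graph_edge: "connected_graph {x, y} {{x, y}}"
proof -
  have "(x, y) \<in> {(u, v). {u, v} \<in> {{x, y}}}\<^sup>*" "(y, x) \<in> {(u, v). {u, v} \<in> {{x, y}}}\<^sup>*"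
    by (auto simp: insert_commute)
  then show ?thesis unfolding connected_graph_def by auto
qed

lemma trunk_candidate_iff:
  "trunk_candidate V E c W D \<longleftrightarrow> W \<subseteq> V \<and> D \<subseteq> E \<and> (\<forall>e\<in>D. e \<subseteq> W) \<and> connected_graph W D \<and>
     (\<forall>x\<in>W. c x \<noteq> None \<longrightarrow> deg D x = 1)"
  unfolding trunk_candidate_def is_subgraph_def by blast

lemma mem_trunks_iff:
  "(W, D) \<in> trunks V E c \<longleftrightarrow> trunk_candidate V E c W D \<and>
     (\<forall>W' D'. trunk_candidate V E c W' D' \<and> W \<subseteq> W' \<and> D \<subseteq> D' \<longrightarrow> W' = W \<and> D' = D)"
  by (simp add: trunks_def is_trunk_def)

definition trunk_root :: "'v set set \<Rightarrow> ('v \<Rightarrow> nat option) \<Rightarrow> 'v set \<Rightarrow> 'v set set \<Rightarrow> 'v \<Rightarrow> bool" where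
  "trunk_root E c W D r \<longleftrightarrow> r \<in> W \<and> (\<forall>x\<in>W. c x \<noteq> None \<longrightarrow> x = r) \<and> (\<forall>e\<in>D \<inter> E_gtgt2 E. r \<in> e)"

locale leaf_coloured_graph =
  fixes V :: "'v set" and E :: "'v set set" and c :: "'v \<Rightarrow> nat option"
  assumes simple: "simple_graph V E"
    and coloured_deg_le_1: "\<And>z. c z \<noteq> None \<Longrightarrow> deg E z \<le> 1"
begin

lemma deg_eq_1_if_coloured:
  assumes "D \<subseteq> E" "c z \<noteq> None" "nbrs D z \<noteq> {}"
  shows "deg D z = 1"
proof -
  have "finite (nbrs E z)" by (rule simple_graph_finite_nbrs[OF simple])
  moreover have "nbrs D z \<subseteq> nbrs E z" by (rule nbrs_mono[OF assms(1)])
  ultimately have "card (nbrs D z) \<le> card (nbrs E z)" "finite (nbrs D z)"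
    by (simp_all add: card_mono finite_subset)
  moreover have "card (nbrs E z) \<le> 1"
    using coloured_deg_le_1[OF assms(2)] by (simp add: deg_eq_card_nbrs)
  moreover have "card (nbrs D z) \<noteq> 0"
    using assms(3) calculation(2) by simp
  ultimately show ?thesis
    unfolding deg_eq_card_nbrs by linarith
qed

lemma trunk_candidate_Un:
  assumes C1: "trunk_candidate V E c W1 D1" and C2: "trunk_candidate V E c W2 D2"
    and z: "z \<in> W1" "z \<in> W2"
  shows "trunk_candidate V E c (W1 \<union> W2) (D1 \<union> D2)"
  unfolding trunk_candidate_iff
proof (intro conjI ballI impI)
  show "W1 \<union> W2 \<subseteq> V" "D1 \<union> D2 \<subseteq> E" using C1 C2 by (simp_all add: trunk_candidate_iff)
  show "connected_graph (W1 \<union> W2) (D1 \<union> D2)"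
    using C1 C2 connected_graph_Un[OF _ _ z] by (simp add: trunk_candidate_iff)
next
  fix e assume "e \<in> D1 \<union> D2"
  then show "e \<subseteq> W1 \<union> W2" using C1 C2 by (auto simp: trunk_candidate_iff)
next
  fix x assume x: "x \<in> W1 \<union> W2" "c x \<noteq> None"
  have "nbrs D1 x \<noteq> {} \<or> nbrs D2 x \<noteq> {}"
    using x C1 C2 unfolding trunk_candidate_iff deg_eq_card_nbrs by force
  then have "nbrs (D1 \<union> D2) x \<noteq> {}"
    using nbrs_mono[of D1 "D1 \<union> D2" x] nbrs_mono[of D2 "D1 \<union> D2" x] by blast
  moreover have "D1 \<union> D2 \<subseteq> E" using C1 C2 by (simp add: trunk_candidate_iff)
  ultimately show "deg (D1 \<union> D2) x = 1" using deg_eq_1_if_coloured x(2) by blast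
qed

lemma trunk_candidate_edge:
  assumes "y \<in> nbrs E x"
  shows "trunk_candidate V E c {x, y} {{x, y}}"
  unfolding trunk_candidate_iff
proof (intro conjI ballI impI)
  have xy: "{x, y} \<in> E" "y \<noteq> x" using assms by (auto simp: nbrs_def)
  then show "{x, y} \<subseteq> V" "{{x, y}} \<subseteq> E"
    using simple_graph_edge_subset[OF simple] by auto
  show "connected_graph {x, y} {{x, y}}" by (rule connected_graph_edge)
  fix z assume "z \<in> {x, y}" "c z \<noteq> None"
  moreover have "nbrs {{x, y}} z \<noteq> {}"
    using \<open>z \<in> {x, y}\<close> xy(2) by (auto simp: nbrs_def insert_commute)
  ultimately show "deg {{x, y}} z = 1"
    using deg_eq_1_if_coloured \<open>{{x, y}} \<subseteq> E\<close> by blast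
qed auto

lemma trunk_maximal:
  assumes "(W, D) \<in> trunks V E c" "trunk_candidate V E c W' D'" "W \<subseteq> W'" "D \<subseteq> D'"
  shows "W' = W \<and> D' = D"
  using assms unfolding mem_trunks_iff by blast

lemma trunk_closed:
  assumes T: "(W, D) \<in> trunks V E c" and x: "x \<in> W" and y: "y \<in> nbrs E x"
  shows "y \<in> W \<and> {x, y} \<in> D"
proof -
  have "trunk_candidate V E c W D" using T by (simp add: mem_trunks_iff)
  then have "trunk_candidate V E c (W \<union> {x, y}) (D \<union> {{x, y}})"
    using trunk_candidate_Un trunk_candidate_edge[OF y] x by blast
  then have "W \<union> {x, y} = W \<and> D \<union> {{x, y}} = D"
    using trunk_maximal[OF T] by blast
  then show ?thesis by blast
qed

lemma trunk_nbrs: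
  assumes "(W, D) \<in> trunks V E c" "x \<in> W"
  shows "nbrs D x = nbrs E x"
proof
  show "nbrs D x \<subseteq> nbrs E x"
    using assms(1) by (intro nbrs_mono) (simp add: mem_trunks_iff trunk_candidate_iff)
  show "nbrs E x \<subseteq> nbrs D x"
    using trunk_closed[OF assms] by (auto simp: nbrs_def)
qed

lemma trunk_unique:
  assumes T1: "(W1, D1) \<in> trunks V E c" and T2: "(W2, D2) \<in> trunks V E c"
    and z: "z \<in> W1" "z \<in> W2"
  shows "W1 = W2 \<and> D1 = D2"
proof -
  have "trunk_candidate V E c (W1 \<union> W2) (D1 \<union> D2)"
    using T1 T2 trunk_candidate_Un[OF _ _ z] by (simp add: mem_trunks_iff)
  then have "W1 \<union> W2 = W1 \<and> D1 \<union> D2 = D1" "W1 \<union> W2 = W2 \<and> D1 \<union> D2 = D2"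
    using trunk_maximal[OF T1, of "W1 \<union> W2" "D1 \<union> D2"] trunk_maximal[OF T2, of "W1 \<union> W2" "D1 \<union> D2"]
    by auto
  then show ?thesis by (metis sup_commute)
qed

lemma ex_trunk:
  assumes "y \<in> nbrs E x"
  shows "\<exists>W D. (W, D) \<in> trunks V E c \<and> x \<in> W"
proof -
  let ?S = "{(W, D). trunk_candidate V E c W D}"
  have "?S \<subseteq> Pow V \<times> Pow E" by (auto simp: trunk_candidate_iff)
  moreover have "finite (Pow V \<times> Pow E)"
    using simple_graph_finite_edges[OF simple] simple by (simp add: simple_graph_def)
  ultimately have "finite ?S" by (rule finite_subset)
  moreover have "({x, y}, {{x, y}}) \<in> ?S" using trunk_candidate_edge[OF assms] by simp
  ultimately obtain T where T: "T \<in> ?S" "({x, y}, {{x, y}}) \<le> T"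
    and max: "\<forall>T'\<in>?S. T \<le> T' \<longrightarrow> T = T'"
    by (blast dest: finite_has_maximal2)
  obtain W D where WD: "T = (W, D)" by fastforce
  have "(W, D) \<in> trunks V E c"
    using T(1) max unfolding WD mem_trunks_iff by auto
  then show ?thesis using T(2) WD by auto
qed

lemma trunk_root_if_condition:
  assumes T: "(W, D) \<in> trunks V E c"
    and "(card {x \<in> W. c x \<noteq> None} = 1 \<and> D \<inter> E_gtgt2 E = {})
      \<or> ({x \<in> W. c x \<noteq> None} = {} \<and> (\<exists>v\<in>W. \<forall>e\<in>E_gtgt2 D. v \<in> e))"
  shows "\<exists>r. trunk_root E c W D r"
  using assms(2)
proof
  assume one: "card {x \<in> W. c x \<noteq> None} = 1 \<and> D \<inter> E_gtgt2 E = {}"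
  then obtain r where r: "{x \<in> W. c x \<noteq> None} = {r}"
    by (meson card_1_singletonE)
  have "r \<in> W" "\<forall>x\<in>W. c x \<noteq> None \<longrightarrow> x = r" using r by blast+
  then have "trunk_root E c W D r" using one by (simp add: trunk_root_def)
  then show ?thesis ..
next
  assume none: "{x \<in> W. c x \<noteq> None} = {} \<and> (\<exists>v\<in>W. \<forall>e\<in>E_gtgt2 D. v \<in> e)"
  then obtain r where r: "r \<in> W" "\<forall>e\<in>E_gtgt2 D. r \<in> e" by blast
  have "e \<in> E_gtgt2 D" if e: "e \<in> D \<inter> E_gtgt2 E" for e
  proof -
    have "e \<subseteq> W" using T e by (simp add: mem_trunks_iff trunk_candidate_iff)
    then have "deg D x = deg E x" if "x \<in> e" for x
      using trunk_nbrs[OF T] that by (simp add: deg_eq_card_nbrs subset_iff)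
    then show ?thesis using e by (simp add: E_gtgt2_def)
  qed
  then have "trunk_root E c W D r" using r none by (simp add: trunk_root_def)
  then show ?thesis ..
qed

lemma trunk_of_big_vertex:
  assumes "3 \<le> deg E u"
  obtains W D where "(W, D) \<in> trunks V E c" "u \<in> W"
proof -
  have "nbrs E u \<noteq> {}" using assms by (auto simp: deg_eq_card_nbrs)
  then show ?thesis using ex_trunk that by blast
qed

context
  fixes par :: "'v \<Rightarrow> 'v option"
  assumes orientation: "orientation E par"
    and rooted: "\<And>W D. (W, D) \<in> trunks V E c \<Longrightarrow> \<exists>r. trunk_root E c W D r \<and> par r = None"
begin

lemma big_parent_is_root_if_rooted:
  assumes ug: "par u = Some g" and big: "3 \<le> deg E u" "3 \<le> deg E g"
  shows "par g = None"
proof -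
  obtain W D where T: "(W, D) \<in> trunks V E c" and u: "u \<in> W"
    using trunk_of_big_vertex[OF big(1)] .
  obtain r where r: "trunk_root E c W D r" "par r = None" using rooted[OF T] by blast
  have "g \<in> nbrs E u" using orientation ug by (simp add: orientation_def)
  then have "{u, g} \<in> D" using trunk_closed[OF T u] by blast
  moreover have "{u, g} \<in> E_gtgt2 E"
    using \<open>g \<in> nbrs E u\<close> big by (auto simp: E_gtgt2_def nbrs_def)
  ultimately have "{u, g} \<in> D \<inter> E_gtgt2 E" by (rule IntI)
  then have "r \<in> {u, g}" using r(1) unfolding trunk_root_def by (elim conjE bspec)
  then show ?thesis using r(2) ug by auto
qed

lemma safe_if_rooted: "safe E par c"
  unfolding safe_def safe_at_def
proof (intro allI impI)
  fix u assume "c u = None" and big: "3 \<le> deg E u"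
  obtain W D where T: "(W, D) \<in> trunks V E c" and u: "u \<in> W"
    using trunk_of_big_vertex[OF big] .
  obtain r where r: "trunk_root E c W D r" "par r = None" using rooted[OF T] by blast
  have coloured_nbr: "y = r" if "y \<in> nbrs E u" "c y \<noteq> None" for y
    using trunk_closed[OF T u that(1)] that(2) r(1) by (simp add: trunk_root_def)
  then have "seen_colours E c u \<subseteq> {the (c r)}"
    by (auto simp: seen_colours_def)
  moreover have "par u = Some y" if "y \<in> nbrs E u" "c y \<noteq> None" for y
  proof -
    have "par u = Some y \<or> par y = Some u"
      using orientation that(1) by (simp add: orientation_def)
    then show ?thesis using coloured_nbr[OF that] r(2) by auto
  qed
  ultimately show "(\<exists>b. seen_colours E c u \<subseteq> {b}) \<and>
      ((\<exists>y\<in>nbrs E u. c y \<noteq> None \<and> par u \<noteq> Some y) \<longrightarrow> (\<exists>p. par u = Some p \<and> c p \<noteq> None))"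
    by blast
qed

end

lemma ex_orientation_rooted_in_trunks:
  assumes acyclic: "\<not> has_cycle V E"
    and roots: "\<And>W D. (W, D) \<in> trunks V E c \<Longrightarrow> \<exists>r. trunk_root E c W D r"
  obtains par where "orientation E par"
    and "\<And>W D. (W, D) \<in> trunks V E c \<Longrightarrow> \<exists>r. trunk_root E c W D r \<and> par r = None"
proof -
  let ?\<T> = "trunks V E c"
  have "\<forall>T\<in>?\<T>. \<exists>rp. trunk_root E c (fst T) (snd T) (fst rp) \<and> orientation (snd T) (snd rp) \<and>
      snd rp (fst rp) = None"
  proof
    fix T assume T: "T \<in> ?\<T>"
    obtain W D where WD: "T = (W, D)" by fastforce
    then obtain r where r: "trunk_root E c W D r" using roots T by blast
    have "forest W D"
      using forest_subgraph[of V E W D] simple acyclic T WD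
      by (simp add: forest_def mem_trunks_iff trunk_candidate_iff)
    then obtain p where p: "orientation D p" "p r = None"
      using forest_ex_orientation[of W D r] by blast
    show "\<exists>rp. trunk_root E c (fst T) (snd T) (fst rp) \<and> orientation (snd T) (snd rp) \<and>
        snd rp (fst rp) = None"
      using WD r p by (intro exI[of _ "(r, p)"]) simp
  qed
  then obtain rp where rp_all: "\<forall>T\<in>?\<T>. trunk_root E c (fst T) (snd T) (fst (rp T)) \<and>
      orientation (snd T) (snd (rp T)) \<and> snd (rp T) (fst (rp T)) = None"
    by (rule bchoice[THEN exE])
  then have rp: "trunk_root E c (fst T) (snd T) (fst (rp T))" "orientation (snd T) (snd (rp T))"
      "snd (rp T) (fst (rp T)) = None" if "T \<in> ?\<T>" for T
    using rp_all that by simp_all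
  obtain par where par: "orientation E par" "\<forall>T\<in>?\<T>. \<forall>x\<in>fst T. par x = snd (rp T) x"
  proof (rule exE[OF orientation_glue[of E ?\<T> "\<lambda>T. snd (rp T)"]])
    show "\<exists>T\<in>?\<T>. x \<in> fst T" if "y \<in> nbrs E x" for x y
      using ex_trunk[OF that] by (metis fst_conv)
    show "T = T'" if "T \<in> ?\<T>" "T' \<in> ?\<T>" "x \<in> fst T" "x \<in> fst T'" for T T' x
      using that trunk_unique[of "fst T" "snd T" "fst T'" "snd T'" x] by (simp add: prod_eq_iff)
    show "y \<in> fst T" if "T \<in> ?\<T>" "x \<in> fst T" "y \<in> nbrs E x" for T x y
      using that trunk_closed[of "fst T" "snd T" x y] by simp
    show "nbrs (snd T) x = nbrs E x" if "T \<in> ?\<T>" "x \<in> fst T" for T x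
      using that trunk_nbrs[of "fst T" "snd T" x] by simp
    show "orientation (snd T) (snd (rp T))" if "T \<in> ?\<T>" for T
      using rp(2)[OF that] .
  qed (use that in blast)
  have rooted: "\<exists>r. trunk_root E c W D r \<and> par r = None" if "(W, D) \<in> ?\<T>" for W D
  proof
    let ?r = "fst (rp (W, D))"
    have "trunk_root E c W D ?r" using rp(1)[OF that] by simp
    moreover have "par ?r = snd (rp (W, D)) ?r"
      using par(2) that calculation by (simp add: trunk_root_def)
    ultimately show "trunk_root E c W D ?r \<and> par ?r = None" using rp(3)[OF that] by simp
  qed
  show ?thesis by (rule that[OF par(1) rooted])
qed

theorem win_bob_if_trunks_rooted:
  assumes "\<not> has_cycle V E"
    and "\<And>W D. (W, D) \<in> trunks V E c \<Longrightarrow> \<exists>r. trunk_root E c W D r"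
  shows "win_bob 3 V E c"
proof -
  obtain par where par: "orientation E par"
    and rooted: "\<And>W D. (W, D) \<in> trunks V E c \<Longrightarrow> \<exists>r. trunk_root E c W D r \<and> par r = None"
    using ex_orientation_rooted_in_trunks[OF assms] by blast
  interpret shallow_orientation V E par
    using simple par big_parent_is_root_if_rooted[OF par rooted]
    by unfold_locales blast+
  show ?thesis
    by (rule safe_imp_win_bob[OF safe_if_rooted[OF par rooted]])
qed

end

section \<open>The reduced forest\<close>

lemma mem_R_V_iff: "(T, x) \<in> R_V V E c \<longleftrightarrow> T \<in> trunks V E c \<and> x \<in> fst T"
  unfolding R_V_def by blast

context
  fixes V :: "'a set" and E :: "'a set set" and c :: "'a \<Rightarrow> nat option"
  assumes forest: "forest V E"
begin

lemma trunk_parts: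
  assumes "T \<in> trunks V E c"
  shows "fst T \<subseteq> V" "snd T \<subseteq> E" "\<And>e. e \<in> snd T \<Longrightarrow> e \<subseteq> fst T"
    "\<And>x. x \<in> fst T \<Longrightarrow> c x \<noteq> None \<Longrightarrow> deg (snd T) x = 1"
  using assms by (auto simp: mem_trunks_iff[of "fst T" "snd T", simplified] trunk_candidate_iff)

lemma R_E_edge:
  assumes "{p, q} \<in> R_E V E c"
  shows "fst q = fst p \<and> fst p \<in> trunks V E c \<and> {snd p, snd q} \<in> snd (fst p)"
proof -
  obtain T x y where e: "{p, q} = {(T, x), (T, y)}" "T \<in> trunks V E c" "{x, y} \<in> snd T"
    using assms unfolding R_E_def by blast
  then have "p = (T, x) \<and> q = (T, y) \<or> p = (T, y) \<and> q = (T, x)"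
    by (simp add: doubleton_eq_iff)
  then show ?thesis using e by (auto simp: insert_commute)
qed

lemma simple_graph_R': "simple_graph (R_V V E c) (R'_E V E c)"
  unfolding simple_graph_def
proof (intro conjI ballI)
  have simple: "simple_graph V E" using forest by (simp add: forest_def)
  have "trunks V E c \<subseteq> Pow V \<times> Pow E"
    using trunk_parts(1,2) by fastforce
  then have "finite (trunks V E c)"
    using simple simple_graph_finite_edges[OF simple] finite_subset
    by (metis finite_Pow_iff finite_SigmaI simple_graph_def)
  moreover have "R_V V E c \<subseteq> trunks V E c \<times> V"
    using trunk_parts(1) by (fastforce simp: R_V_def)
  ultimately show "finite (R_V V E c)"
    using simple finite_subset by (metis finite_SigmaI simple_graph_def)
next
  fix e assume "e \<in> R'_E V E c"
  then obtain T x y where e: "e = {(T, x), (T, y)}" "T \<in> trunks V E c" "{x, y} \<in> snd T"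
    unfolding R'_E_def E_gt2_def R_E_def by blast
  have simple: "simple_graph V E" using forest by (simp add: forest_def)
  have "{x, y} \<in> E" using trunk_parts(2)[OF e(2)] e(3) by blast
  then have "x \<noteq> y" using simple unfolding simple_graph_def by fastforce
  moreover have "x \<in> fst T" "y \<in> fst T" using trunk_parts(3)[OF e(2) e(3)] by simp_all
  then have "(T, x) \<in> R_V V E c" "(T, y) \<in> R_V V E c" using e(2) by (simp_all add: mem_R_V_iff)
  ultimately show "\<exists>p q. e = {p, q} \<and> p \<noteq> q \<and> p \<in> R_V V E c \<and> q \<in> R_V V E c"
    using e(1) by blast
qed

lemma R_E_acyclic: "\<not> has_cycle (R_V V E c) (R_E V E c)"
proof
  assume "has_cycle (R_V V E c) (R_E V E c)"
  then obtain zs where L: "3 \<le> length zs" and d: "distinct zs" and zsV: "set zs \<subseteq> R_V V E c"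
    and edge: "\<And>i. i < length zs \<Longrightarrow> {zs ! i, zs ! ((i + 1) mod length zs)} \<in> R_E V E c"
    unfolding has_cycle_def by blast
  define T where "T = fst (zs ! 0)"
  have same: "fst (zs ! i) = T" if "i < length zs" for i
    using that
  proof (induction i)
    case (Suc i)
    then have "(i + 1) mod length zs = Suc i" by simp
    then show ?case using R_E_edge[OF edge[of i]] Suc by simp
  qed (simp add: T_def)
  have T: "T \<in> trunks V E c" using R_E_edge[OF edge[of 0]] L by (force simp: T_def)
  have "inj_on snd (set zs)"
    using same by (intro inj_onI) (metis in_set_conv_nth prod.expand)
  then have "distinct (map snd zs)" using d by (simp add: distinct_map)
  moreover have "set (map snd zs) \<subseteq> V"
  proof
    fix v assume "v \<in> set (map snd zs)"
    then obtain i where i: "i < length zs" "v = snd (zs ! i)" by (auto simp: in_set_conv_nth)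
    then have "(T, v) \<in> R_V V E c" using zsV same[OF i(1)] by (metis nth_mem prod.collapse subsetD)
    then show "v \<in> V" using trunk_parts(1)[OF T] by (auto simp: mem_R_V_iff)
  qed
  moreover have "{map snd zs ! i, map snd zs ! ((i + 1) mod length (map snd zs))} \<in> E"
    if "i < length (map snd zs)" for i
  proof -
    have "{snd (zs ! i), snd (zs ! ((i + 1) mod length zs))} \<in> snd T"
      using R_E_edge[OF edge[of i]] same[of i] that by simp
    moreover have "(i + 1) mod length zs < length zs" using that by (auto intro: mod_less_divisor)
    ultimately show ?thesis using trunk_parts(2)[OF T] that by auto
  qed
  ultimately have "has_cycle V E"
    unfolding has_cycle_def using L by (intro exI[of _ "map snd zs"]) simp
  then show False using forest by (simp add: forest_def)
qed

lemma R'_E_acyclic: "\<not> has_cycle (R_V V E c) (R'_E V E c)"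
  using R_E_acyclic unfolding has_cycle_def R'_E_def E_gt2_def by blast

lemma R'_coloured_deg_le_1:
  assumes "R_col c p \<noteq> None"
  shows "deg (R'_E V E c) p \<le> 1"
proof (cases "nbrs (R'_E V E c) p = {}")
  case True
  then show ?thesis by (simp add: deg_eq_card_nbrs)
next
  case False
  obtain T x where p: "p = (T, x)" by fastforce
  have nbr: "fst q = T \<and> T \<in> trunks V E c \<and> {x, snd q} \<in> snd T \<and> snd q \<noteq> x"
    if "q \<in> nbrs (R'_E V E c) p" for q
  proof -
    have "{p, q} \<in> R_E V E c" "q \<noteq> p"
      using that by (auto simp: nbrs_def R'_E_def E_gt2_def)
    then show ?thesis using R_E_edge p by (metis fst_conv prod.expand snd_conv)
  qed
  then have sub: "nbrs (R'_E V E c) p \<subseteq> Pair T ` nbrs (snd T) x"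
    by (force simp: nbrs_def)
  obtain q where "q \<in> nbrs (R'_E V E c) p" using False by blast
  with nbr have T: "T \<in> trunks V E c" and "x \<in> fst T"
    using trunk_parts(3) by blast+
  then have "deg (snd T) x = 1" using trunk_parts(4) assms p by (simp add: R_col_def)
  then have one: "card (nbrs (snd T) x) = 1" "finite (nbrs (snd T) x)"
    by (auto simp: deg_eq_card_nbrs intro: card_ge_0_finite)
  have "card (nbrs (R'_E V E c) p) \<le> card (Pair T ` nbrs (snd T) x)"
    by (rule card_mono[OF finite_imageI[OF one(2)] sub])
  also have "\<dots> \<le> 1" using card_image_le[OF one(2), of "Pair T"] one(1) by simp
  finally show ?thesis by (simp add: deg_eq_card_nbrs)
qed

end

theorem lemma6p2:
  fixes V :: "'a set" and E :: "'a set set" and c :: "'a \<Rightarrow> nat option"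
  assumes "pc_forest V E c"
    and "\<forall>(W, D) \<in> trunks (R_V V E c) (R'_E V E c) (R_col c).
           (card {x \<in> W. R_col c x \<noteq> None} = 1 \<and> D \<inter> E_gtgt2 (R'_E V E c) = {})
         \<or> ({x \<in> W. R_col c x \<noteq> None} = {} \<and> (\<exists>v\<in>W. \<forall>e \<in> E_gtgt2 D. v \<in> e))"
  shows "alice_wins_RCG 3 (R_V V E c) (R'_E V E c) (R_col c)"
proof -
  have forest: "forest V E" using assms(1) by (simp add: pc_forest_def)
  interpret R': leaf_coloured_graph "R_V V E c" "R'_E V E c" "R_col c"
    using simple_graph_R'[OF forest] R'_coloured_deg_le_1[OF forest] by unfold_locales
  have "win_bob 3 (R_V V E c) (R'_E V E c) (R_col c)"
  proof (rule R'.win_bob_if_trunks_rooted)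
    show "\<not> has_cycle (R_V V E c) (R'_E V E c)" by (rule R'_E_acyclic[OF forest])
  next
    fix W D assume T: "(W, D) \<in> trunks (R_V V E c) (R'_E V E c) (R_col c)"
    then show "\<exists>r. trunk_root (R'_E V E c) (R_col c) W D r"
      using assms(2) by (intro R'.trunk_root_if_condition) fastforce+
  qed
  then show ?thesis by (simp add: alice_wins_RCG_def)
qed

end
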